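(* Let $d=(d_1,\ldots,d_n)$ be a degree sequence with $n\ge 4$, and let $m=\frac12\sum_i d_i$. There is a realization of $d$ as a bridge-less bipartite cactus if and only if $m\le 2\left\lfloor\frac{2(n-1)}{3}\right\rfloor$, $m$ is even, and $d_i$ is even for every $i$.
   Context: A degree sequence is a sequence $d=(d_1,\ldots,d_n)$ of integers with $d_i\in\{1,\ldots,n-1\}$, even sum, and $d_1\ge\cdots\ge d_n$. A realization of $d$ is a simple graph on $\{1,\ldots,n\}$ in which vertex $i$ has degree $d_i$. A cactus is a connected simple graph in which every edge lies on at most one cycle; it is bridge-less if no edge's removal disconnects it. *)

theory Defs
  imports Main
begin

definition degree_sequence :: "nat \<Rightarrow> (nat \<Rightarrow> nat) \<Rightarrow> bool" where
  "degree_sequence n d \<longleftrightarrow>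
     (\<forall>i\<in>{1..n}. 1 \<le> d i \<and> d i \<le> n - 1) \<and>
     even (\<Sum>i=1..n. d i) \<and>
     (\<forall>i\<in>{1..n}. \<forall>j\<in>{1..n}. i \<le> j \<longrightarrow> d j \<le> d i)"

definition simple_graph :: "'a set \<Rightarrow> 'a set set \<Rightarrow> bool" where
  "simple_graph V E \<longleftrightarrow> (\<forall>e\<in>E. \<exists>u v. u \<in> V \<and> v \<in> V \<and> u \<noteq> v \<and> e = {u, v})"

definition realization :: "nat \<Rightarrow> (nat \<Rightarrow> nat) \<Rightarrow> nat set set \<Rightarrow> bool" where
  "realization n d E \<longleftrightarrow> simple_graph {1..n} E \<and>
     (\<forall>i\<in>{1..n}. card {e\<in>E. i \<in> e} = d i)"

definition reachable :: "'a set set \<Rightarrow> 'a \<Rightarrow> 'a \<Rightarrow> bool" where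
  "reachable E u v \<longleftrightarrow> (u, v) \<in> {(x, y). {x, y} \<in> E}\<^sup>*"

definition connected_graph :: "'a set \<Rightarrow> 'a set set \<Rightarrow> bool" where
  "connected_graph V E \<longleftrightarrow> (\<forall>u\<in>V. \<forall>v\<in>V. reachable E u v)"

definition cycle_edges :: "'a list \<Rightarrow> 'a set set" where
  "cycle_edges vs = {{vs ! i, vs ! ((i + 1) mod length vs)} | i. i < length vs}"

definition is_cycle :: "'a set set \<Rightarrow> 'a set set \<Rightarrow> bool" where
  "is_cycle E C \<longleftrightarrow> (\<exists>vs. distinct vs \<and> 3 \<le> length vs \<and> C = cycle_edges vs \<and> C \<subseteq> E)"

definition cactus :: "'a set \<Rightarrow> 'a set set \<Rightarrow> bool" where
  "cactus V E \<longleftrightarrow> simple_graph V E \<and> connected_graph V E \<and>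
     (\<forall>e\<in>E. \<forall>C1 C2. is_cycle E C1 \<and> is_cycle E C2 \<and> e \<in> C1 \<and> e \<in> C2 \<longrightarrow> C1 = C2)"

definition bridgeless :: "'a set \<Rightarrow> 'a set set \<Rightarrow> bool" where
  "bridgeless V E \<longleftrightarrow> (\<forall>e\<in>E. connected_graph V (E - {e}))"

definition bipartite :: "'a set \<Rightarrow> 'a set set \<Rightarrow> bool" where
  "bipartite V E \<longleftrightarrow> (\<exists>A\<subseteq>V. \<forall>e\<in>E. card (e \<inter> A) = 1)"

end

theory Submission
  imports Defs
begin

text \<open>
  In a bridgeless cactus every edge lies on a cycle, and on only one, so the edges are partitioned
  into cycles. Hence all degrees are even, and if the graph is bipartite every cycle has even length
  at least 4. With c cycles and m edges, the cyclomatic inequality m + 1 \<le> n + c of a connected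
  graph and 4c \<le> m give 3m \<le> 4(n - 1), and m is even.

  Conversely, by induction on n: if all degrees are 2 a single cycle through all vertices works
  (n is even and at least 4). Otherwise the bound forces three vertices a, b, c of degree 2 besides
  a vertex v of larger degree; realize the sequence on the other vertices with the degree of v
  lowered by 2, and glue the 4-cycle v a b c onto it at v.
\<close>

section \<open>Reachability and simple graphs\<close>

lemma reachable_refl [simp]: "reachable E u u"
  by (simp add: reachable_def)

lemma reachable_edge: "{x, y} \<in> E \<Longrightarrow> reachable E x y"
  by (auto simp: reachable_def)

lemma reachable_trans: "reachable E x y \<Longrightarrow> reachable E y z \<Longrightarrow> reachable E x z"
  unfolding reachable_def by (rule rtrancl_trans)

lemma reachable_sym: "reachable E x y \<Longrightarrow> reachable E y x"
proof -
  have "sym {(x, y). {x, y} \<in> E}"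
    by (auto intro: symI simp: insert_commute)
  then show "reachable E x y \<Longrightarrow> reachable E y x"
    unfolding reachable_def by (metis sym_rtrancl symD)
qed

lemma reachable_mono: "E \<subseteq> F \<Longrightarrow> reachable E x y \<Longrightarrow> reachable F x y"
  unfolding reachable_def by (erule rtrancl_mono[THEN subsetD, rotated]) auto

lemma simple_graph_edge_subset: "simple_graph V E \<Longrightarrow> e \<in> E \<Longrightarrow> e \<subseteq> V"
  unfolding simple_graph_def by fastforce

lemma simple_graph_card_edge: "simple_graph V E \<Longrightarrow> e \<in> E \<Longrightarrow> card e = 2"
  unfolding simple_graph_def by fastforce

lemma is_cycle_subset: "is_cycle E C \<Longrightarrow> C \<subseteq> E"
  unfolding is_cycle_def by blast

lemma is_cycle_mono: "is_cycle F C \<Longrightarrow> F \<subseteq> E \<Longrightarrow> is_cycle E C"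
  unfolding is_cycle_def by blast

lemma simple_graph_finite_edges: "simple_graph V E \<Longrightarrow> finite V \<Longrightarrow> finite E"
  by (rule finite_subset[of E "Pow V"]) (auto dest: simple_graph_edge_subset)

section \<open>Cycles and paths as vertex lists\<close>

lemma mod_add_neq_self:
  fixes p k s :: nat
  assumes "p < k" "0 < s" "s < k"
  shows "(p + s) mod k \<noteq> p"
proof (cases "p + s < k")
  case False
  then have "(p + s) mod k = p + s - k"
    using assms by (simp add: le_mod_geq)
  then show ?thesis using assms False by linarith
qed (use assms in simp)

lemma add_pred_Suc_mod:
  fixes i k :: nat
  assumes "i < k"
  shows "(Suc i mod k + (k - 1)) mod k = i"
proof (cases "Suc i < k")
  case True
  then have "Suc i mod k + (k - 1) = i + k" by simp
  then show ?thesis using assms by simp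
next
  case False
  then have "Suc i = k" using assms by simp
  then show ?thesis by simp
qed

lemma cyclic_induct:
  fixes k :: nat
  assumes "i0 < k" "P i0"
    and step: "\<And>i. i < k \<Longrightarrow> P i \<Longrightarrow> P (Suc i mod k)"
    and "j < k"
  shows "P j"
proof -
  have "P ((i0 + t) mod k)" for t
  proof (induction t)
    case (Suc t)
    then have "P (Suc ((i0 + t) mod k) mod k)"
      using step assms(1) by simp
    then show ?case by (simp add: mod_Suc_eq)
  qed (use assms in simp)
  from this[of "j + k - i0"] show ?thesis
    using assms by simp
qed

lemma card_pair_inter_eq_1_iff:
  "a \<noteq> b \<Longrightarrow> card ({a, b} \<inter> A) = 1 \<longleftrightarrow> (a \<in> A \<longleftrightarrow> b \<notin> A)"
  by (cases "a \<in> A"; cases "b \<in> A") auto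

definition cycle_edge :: "'a list \<Rightarrow> nat \<Rightarrow> 'a set" where
  "cycle_edge vs i = {vs ! i, vs ! (Suc i mod length vs)}"

lemma cycle_edges_eq_image: "cycle_edges vs = cycle_edge vs ` {..<length vs}"
  by (auto simp: cycle_edges_def cycle_edge_def)

lemma cycle_edge_Suc: "Suc i < length vs \<Longrightarrow> cycle_edge vs i = {vs ! i, vs ! Suc i}"
  by (simp add: cycle_edge_def)

lemma cycle_edge_last:
  "vs \<noteq> [] \<Longrightarrow> cycle_edge vs (length vs - 1) = {vs ! (length vs - 1), vs ! 0}"
  by (simp add: cycle_edge_def)

context
  fixes vs :: "'a list"
  assumes distinct_vs: "distinct vs" and length_vs: "3 \<le> length vs"
begin

private lemma length_pos: "0 < length vs" and nonempty_vs: "vs \<noteq> []"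
  using length_vs by auto

private lemma Suc_mod_length_less: "Suc i mod length vs < length vs"
  using length_pos by simp

private lemma nth_eq_nth_iff: "i < length vs \<Longrightarrow> j < length vs \<Longrightarrow> vs ! i = vs ! j \<longleftrightarrow> i = j"
  by (rule nth_eq_iff_index_eq[OF distinct_vs])

lemma cycle_edge_ends_neq:
  assumes "i < length vs"
  shows "vs ! i \<noteq> vs ! (Suc i mod length vs)"
proof -
  have "Suc i mod length vs \<noteq> i"
    using mod_add_neq_self[of i "length vs" 1] assms length_vs by simp
  then show ?thesis
    using nth_eq_nth_iff[OF assms Suc_mod_length_less] by simp
qed

lemma inj_on_cycle_edge: "inj_on (cycle_edge vs) {..<length vs}"
proof (rule inj_onI)
  let ?k = "length vs"
  fix i j assume "i \<in> {..<?k}" "j \<in> {..<?k}" and eq: "cycle_edge vs i = cycle_edge vs j"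
  then have i: "i < ?k" and j: "j < ?k" by auto
  from eq consider "vs ! i = vs ! j" | "vs ! i = vs ! (Suc j mod ?k)" "vs ! (Suc i mod ?k) = vs ! j"
    unfolding cycle_edge_def doubleton_eq_iff by blast
  then show "i = j"
  proof cases
    case 2
    then have i_eq: "Suc j mod ?k = i" and j_eq: "Suc i mod ?k = j"
      using nth_eq_nth_iff[OF i Suc_mod_length_less] nth_eq_nth_iff[OF Suc_mod_length_less j]
      by simp_all
    have "Suc (Suc i) mod ?k = Suc (Suc i mod ?k) mod ?k"
      by (simp add: mod_Suc_eq)
    also have "\<dots> = i"
      using i_eq j_eq by simp
    finally show ?thesis
      using mod_add_neq_self[of i ?k 2] i length_vs by simp
  qed (use i j nth_eq_nth_iff in simp)
qed

lemma card_cycle_edges: "card (cycle_edges vs) = length vs"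
  by (simp add: cycle_edges_eq_image card_image inj_on_cycle_edge)

lemma simple_graph_cycle_edges: "simple_graph (set vs) (cycle_edges vs)"
  unfolding simple_graph_def cycle_edges_eq_image cycle_edge_def
  using cycle_edge_ends_neq Suc_mod_length_less by (blast intro: nth_mem)

lemma degree_cycle_edges:
  "card {e \<in> cycle_edges vs. x \<in> e} = (if x \<in> set vs then 2 else 0)"
proof (cases "x \<in> set vs")
  case False
  then have "{e \<in> cycle_edges vs. x \<in> e} = {}"
    using Suc_mod_length_less by (auto simp: cycle_edges_eq_image cycle_edge_def)
  then have "card {e \<in> cycle_edges vs. x \<in> e} = 0" by (simp only: card.empty)
  then show ?thesis using False by simp
next
  case True
  let ?k = "length vs"
  obtain p where p: "p < ?k" "vs ! p = x"
    using True by (auto simp: in_set_conv_nth)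
  define q where "q = (p + (?k - 1)) mod ?k"
  have "q < ?k"
    using length_pos by (simp add: q_def)
  have "q \<noteq> p"
    unfolding q_def by (rule mod_add_neq_self) (use p length_vs in auto)
  have "Suc (p + (?k - 1)) = p + ?k"
    using length_pos by simp
  then have "Suc q mod ?k = p"
    using p by (simp add: q_def mod_Suc_eq)
  have q_unique: "i = q" if "i < ?k" "Suc i mod ?k = p" for i
    unfolding q_def that(2)[symmetric] by (rule add_pred_Suc_mod[OF that(1), symmetric])
  have "{i. i < ?k \<and> x \<in> cycle_edge vs i} = {i. i < ?k \<and> (i = p \<or> Suc i mod ?k = p)}"
    unfolding cycle_edge_def p(2)[symmetric]
    using p(1) Suc_mod_length_less by (auto simp: nth_eq_nth_iff)
  also have "\<dots> = {p, q}"
    using p(1) \<open>q < ?k\<close> \<open>Suc q mod ?k = p\<close> q_unique by blast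
  finally have "{e \<in> cycle_edges vs. x \<in> e} = cycle_edge vs ` {p, q}"
    unfolding cycle_edges_eq_image by blast
  moreover have "inj_on (cycle_edge vs) {p, q}"
    using inj_on_cycle_edge by (rule inj_on_subset) (use p \<open>q < ?k\<close> in auto)
  ultimately show ?thesis
    using True \<open>q \<noteq> p\<close> by (simp add: card_image)
qed

lemma even_length_if_bipartite:
  assumes "\<forall>e\<in>cycle_edges vs. card (e \<inter> A) = 1"
  shows "even (length vs)"
proof -
  let ?k = "length vs"
  have alternate: "vs ! (Suc i mod ?k) \<in> A \<longleftrightarrow> vs ! i \<notin> A" if "i < ?k" for i
    using assms card_pair_inter_eq_1_iff[OF cycle_edge_ends_neq[OF that]] that
    by (auto simp: cycle_edges_eq_image cycle_edge_def)
  have alternate_Suc: "vs ! Suc i \<in> A \<longleftrightarrow> vs ! i \<notin> A" if "Suc i < ?k" for i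
    using alternate[of i] that by simp
  have parity: "i < ?k \<Longrightarrow> vs ! i \<in> A \<longleftrightarrow> (vs ! 0 \<in> A \<longleftrightarrow> even i)" for i
  proof (induction i)
    case (Suc i)
    then show ?case using alternate_Suc[of i] by auto
  qed simp
  have "vs ! 0 \<in> A \<longleftrightarrow> vs ! (?k - 1) \<notin> A"
    using alternate[of "?k - 1"] length_pos by simp
  moreover have "vs ! (?k - 1) \<in> A \<longleftrightarrow> (vs ! 0 \<in> A \<longleftrightarrow> even (?k - 1))"
    using parity[of "?k - 1"] length_pos by simp
  ultimately have "odd (?k - 1)" by blast
  then show ?thesis
    using length_pos by (cases ?k) auto
qed

lemma bipartite_cycle_edges:
  assumes "even (length vs)"
  shows "bipartite (set vs) (cycle_edges vs)"
proof -
  let ?k = "length vs"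
  define A where "A = {vs ! i | i. i < ?k \<and> even i}"
  have in_A: "vs ! j \<in> A \<longleftrightarrow> even j" if "j < ?k" for j
    using that nth_eq_nth_iff by (auto simp: A_def)
  have "card (cycle_edge vs i \<inter> A) = 1" if "i < ?k" for i
  proof -
    have "vs ! (Suc i mod ?k) \<in> A \<longleftrightarrow> even (Suc i)"
      using in_A[OF Suc_mod_length_less] dvd_mod_iff[OF assms] by simp
    then show ?thesis
      using in_A[OF that] card_pair_inter_eq_1_iff[OF cycle_edge_ends_neq[OF that]]
      by (simp add: cycle_edge_def)
  qed
  moreover have "A \<subseteq> set vs"
    by (auto simp: A_def)
  ultimately show ?thesis
    unfolding bipartite_def cycle_edges_eq_image by blast
qed

lemma reachable_along_cycle:
  assumes "a \<le> b" "b < length vs" "\<And>i. a \<le> i \<Longrightarrow> i < b \<Longrightarrow> cycle_edge vs i \<in> F"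
  shows "reachable F (vs ! a) (vs ! b)"
  using assms
proof (induction b)
  case (Suc b)
  show ?case
  proof (cases "a = Suc b")
    case False
    then have "a \<le> b" using Suc.prems(1) by simp
    have "reachable F (vs ! a) (vs ! b)"
      using Suc.IH \<open>a \<le> b\<close> Suc.prems by simp
    moreover have "{vs ! b, vs ! Suc b} \<in> F"
      using Suc.prems(3)[of b] \<open>a \<le> b\<close> cycle_edge_Suc[OF Suc.prems(2)] by simp
    ultimately show ?thesis by (blast intro: reachable_trans reachable_edge)
  qed simp
qed simp

lemma connected_cycle_edges_minus_edge:
  assumes j: "j < length vs"
  shows "connected_graph (set vs) (cycle_edges vs - {cycle_edge vs j})"
proof -
  let ?k = "length vs"
  let ?F = "cycle_edges vs - {cycle_edge vs j}"
  have in_F: "cycle_edge vs i \<in> ?F" if "i < ?k" "i \<noteq> j" for i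
    using that j inj_on_cycle_edge by (auto simp: cycle_edges_eq_image dest: inj_onD)
  have to_j: "reachable ?F (vs ! i) (vs ! j)" if i: "i < ?k" for i
  proof (cases "i \<le> j")
    case True
    then show ?thesis using reachable_along_cycle[of i j ?F] in_F j by auto
  next
    case False
    have "reachable ?F (vs ! i) (vs ! (?k - 1))"
      using reachable_along_cycle[of i "?k - 1" ?F] in_F i False by auto
    moreover have "{vs ! (?k - 1), vs ! 0} \<in> ?F"
      using in_F[of "?k - 1"] False i cycle_edge_last[OF nonempty_vs] by auto
    then have "reachable ?F (vs ! (?k - 1)) (vs ! 0)"
      by (rule reachable_edge)
    moreover have "reachable ?F (vs ! 0) (vs ! j)"
      using reachable_along_cycle[of 0 j ?F] in_F j by auto
    ultimately show ?thesis by (blast intro: reachable_trans)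
  qed
  show ?thesis
    unfolding connected_graph_def
  proof (intro ballI)
    fix u w assume "u \<in> set vs" "w \<in> set vs"
    then obtain a b where "a < ?k" "u = vs ! a" "b < ?k" "w = vs ! b"
      by (auto simp: in_set_conv_nth)
    then show "reachable ?F u w"
      using to_j by (blast intro: reachable_trans reachable_sym)
  qed
qed

lemma connected_cycle_edges: "connected_graph (set vs) (cycle_edges vs)"
proof -
  have "connected_graph (set vs) (cycle_edges vs - {cycle_edge vs 0})"
    using connected_cycle_edges_minus_edge length_pos by simp
  then show ?thesis
    unfolding connected_graph_def by (meson Diff_subset reachable_mono)
qed

lemma bridgeless_cycle_edges: "bridgeless (set vs) (cycle_edges vs)"
  using connected_cycle_edges_minus_edge
  unfolding bridgeless_def cycle_edges_eq_image by blast

end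

lemma cycle_within_cycle_edges:
  assumes vs: "distinct vs" "3 \<le> length vs" and "is_cycle (cycle_edges vs) C"
  shows "C = cycle_edges vs"
proof -
  let ?k = "length vs"
  obtain ws where ws: "distinct ws" "3 \<le> length ws" "C = cycle_edges ws"
    and C_sub: "C \<subseteq> cycle_edges vs"
    using assms(3) unfolding is_cycle_def by blast
  have "0 < ?k" using vs(2) by linarith
  have finite_cycle_edges: "finite (cycle_edges vs)"
    by (simp add: cycle_edges_eq_image)
  \<comment> \<open>every vertex of C has degree 2 in both cycles, so C contains the successor of each
      of its edges\<close>
  have step: "cycle_edge vs (Suc i mod ?k) \<in> C" if "i < ?k" "cycle_edge vs i \<in> C" for i
  proof -
    let ?y = "vs ! (Suc i mod ?k)"
    have "?y \<in> set ws"
      using that(2) simple_graph_edge_subset[OF simple_graph_cycle_edges[OF ws(1,2)]] ws(3)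
      by (auto simp: cycle_edge_def)
    moreover have "?y \<in> set vs"
      using \<open>0 < ?k\<close> by simp
    ultimately have "card {e \<in> C. ?y \<in> e} = card {e \<in> cycle_edges vs. ?y \<in> e}"
      using degree_cycle_edges[OF ws(1,2)] degree_cycle_edges[OF vs] ws(3) by simp
    then have "{e \<in> C. ?y \<in> e} = {e \<in> cycle_edges vs. ?y \<in> e}"
      using C_sub finite_cycle_edges by (intro card_subset_eq) auto
    moreover have "cycle_edge vs (Suc i mod ?k) \<in> {e \<in> cycle_edges vs. ?y \<in> e}"
      using \<open>0 < ?k\<close> by (simp add: cycle_edges_eq_image cycle_edge_def)
    ultimately show ?thesis by blast
  qed
  have "cycle_edge ws 0 \<in> C"
    unfolding ws(3) cycle_edges_eq_image using ws(2) by (intro imageI) auto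
  then obtain i0 where "i0 < ?k" "cycle_edge vs i0 \<in> C"
    using C_sub unfolding cycle_edges_eq_image by (metis imageE lessThan_iff subsetD)
  then have "cycle_edge vs j \<in> C" if "j < ?k" for j
    using cyclic_induct[of i0 ?k "\<lambda>i. cycle_edge vs i \<in> C"] step that by blast
  then show ?thesis
    using C_sub unfolding cycle_edges_eq_image by blast
qed

definition bipartite_bridgeless_cactus :: "'a set \<Rightarrow> 'a set set \<Rightarrow> bool" where
  "bipartite_bridgeless_cactus V E \<longleftrightarrow> cactus V E \<and> bridgeless V E \<and> bipartite V E"

lemma bipartite_bridgeless_cactus_cycle_edges:
  assumes "distinct vs" "3 \<le> length vs" "even (length vs)"
  shows "bipartite_bridgeless_cactus (set vs) (cycle_edges vs)"
  unfolding bipartite_bridgeless_cactus_def cactus_def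
  using simple_graph_cycle_edges[OF assms(1,2)] connected_cycle_edges[OF assms(1,2)]
    bridgeless_cycle_edges[OF assms(1,2)] bipartite_cycle_edges[OF assms]
    cycle_within_cycle_edges[OF assms(1,2)]
  by blast

definition is_path :: "'a set set \<Rightarrow> 'a list \<Rightarrow> bool" where
  "is_path F ps \<longleftrightarrow> ps \<noteq> [] \<and> distinct ps \<and> (\<forall>i. Suc i < length ps \<longrightarrow> {ps ! i, ps ! Suc i} \<in> F)"

lemma reachable_imp_path:
  assumes "reachable F u w"
  shows "\<exists>ps. is_path F ps \<and> hd ps = u \<and> last ps = w"
  using assms unfolding reachable_def
proof (induction rule: rtrancl_induct)
  case base
  show ?case by (rule exI[of _ "[u]"]) (simp add: is_path_def)
next
  case (step x y)
  then obtain ps where ps: "is_path F ps" "hd ps = u" "last ps = x" by blast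
  have "ps \<noteq> []" using ps(1) by (simp add: is_path_def)
  show ?case
  proof (cases "y \<in> set ps")
    case True
    then obtain j where j: "j < length ps" "ps ! j = y" by (auto simp: in_set_conv_nth)
    have "is_path F (take (Suc j) ps)"
      using ps(1) j unfolding is_path_def by auto
    moreover have "hd (take (Suc j) ps) = u"
      using ps(2) \<open>ps \<noteq> []\<close> by (cases ps) auto
    moreover have "last (take (Suc j) ps) = y"
      using j by (simp add: take_Suc_conv_app_nth)
    ultimately show ?thesis by blast
  next
    case False
    have "ps ! (length ps - 1) = x"
      using ps(3) \<open>ps \<noteq> []\<close> by (simp add: last_conv_nth)
    then have "is_path F (ps @ [y])"
      using ps(1) False step(2) unfolding is_path_def
      by (auto simp: nth_append less_Suc_eq) (metis diff_Suc_Suc diff_zero)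
    then show ?thesis
      using ps(2) \<open>ps \<noteq> []\<close> by auto
  qed
qed

lemma reachable_closes_cycle:
  assumes "reachable F u w" "u \<noteq> w" "{u, w} \<notin> F"
  shows "\<exists>C. is_cycle (insert {u, w} F) C \<and> {u, w} \<in> C"
proof -
  obtain ps where ps: "is_path F ps" "hd ps = u" "last ps = w"
    using reachable_imp_path[OF assms(1)] by blast
  let ?k = "length ps"
  have "ps \<noteq> []" "distinct ps" and edges: "\<And>i. Suc i < ?k \<Longrightarrow> {ps ! i, ps ! Suc i} \<in> F"
    using ps(1) by (auto simp: is_path_def)
  have ends: "ps ! 0 = u" "ps ! (?k - 1) = w"
    using ps(2,3) \<open>ps \<noteq> []\<close> by (simp_all add: hd_conv_nth last_conv_nth)
  have "?k \<noteq> 1" "?k \<noteq> 2"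
    using ends assms(2,3) edges[of 0] by auto
  then have "3 \<le> ?k"
    using \<open>ps \<noteq> []\<close> by (cases ?k) auto
  have closing: "cycle_edge ps (?k - 1) = {u, w}"
    using cycle_edge_last[OF \<open>ps \<noteq> []\<close>] ends by auto
  have "cycle_edge ps i \<in> insert {u, w} F" if "i < ?k" for i
  proof (cases "Suc i < ?k")
    case True
    then show ?thesis using edges[OF True] cycle_edge_Suc[OF True] by simp
  next
    case False
    then have "i = ?k - 1" using that by simp
    then show ?thesis using closing by simp
  qed
  then have "is_cycle (insert {u, w} F) (cycle_edges ps)"
    using \<open>distinct ps\<close> \<open>3 \<le> ?k\<close> unfolding is_cycle_def cycle_edges_eq_image by blast
  moreover have "{u, w} \<in> cycle_edges ps"
    using closing \<open>ps \<noteq> []\<close> unfolding cycle_edges_eq_image by force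
  ultimately show ?thesis by blast
qed

section \<open>Gluing two graphs at a vertex\<close>

lemma connected_graph_glue:
  assumes "connected_graph V1 F1" "connected_graph V2 F2" "V1 \<inter> V2 \<noteq> {}"
  shows "connected_graph (V1 \<union> V2) (F1 \<union> F2)"
proof -
  obtain v where v: "v \<in> V1" "v \<in> V2"
    using assms(3) by blast
  have "reachable (F1 \<union> F2) u v" if "u \<in> V1 \<union> V2" for u
  proof (cases "u \<in> V1")
    case True
    then have "reachable F1 u v"
      using assms(1) v(1) unfolding connected_graph_def by blast
    then show ?thesis by (rule reachable_mono[rotated]) blast
  next
    case False
    then have "reachable F2 u v"
      using that assms(2) v(2) unfolding connected_graph_def by blast
    then show ?thesis by (rule reachable_mono[rotated]) blast
  qed
  then show ?thesis
    unfolding connected_graph_def by (blast intro: reachable_trans reachable_sym)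
qed

lemma bipartition_complement:
  assumes "simple_graph V E" "\<forall>e\<in>E. card (e \<inter> A) = 1"
  shows "\<forall>e\<in>E. card (e \<inter> (V - A)) = 1"
proof
  fix e assume "e \<in> E"
  then obtain a b where "a \<in> V" "b \<in> V" "a \<noteq> b" "e = {a, b}"
    using assms(1) unfolding simple_graph_def by blast
  then show "card (e \<inter> (V - A)) = 1"
    using assms(2) \<open>e \<in> E\<close> card_pair_inter_eq_1_iff[of a b] by auto
qed

text \<open>Walking around the cycle from the edge that leaves the cut vertex v (from any edge if v is
  not on the cycle), the cycle could only change sides at v, which it reaches only at the end.\<close>
lemma cycle_stays_on_side:
  assumes simple: "simple_graph Va Ea" "simple_graph Vb Eb" and common: "Va \<inter> Vb = {v}"
    and ws: "distinct ws" "3 \<le> length ws" "cycle_edges ws \<subseteq> Ea \<union> Eb"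
    and p: "p < length ws" "v \<in> set ws \<Longrightarrow> ws ! p = v" "cycle_edge ws p \<in> Ea"
  shows "cycle_edges ws \<subseteq> Ea"
proof -
  let ?k = "length ws"
  have "0 < ?k" using ws(2) by linarith
  have step: "cycle_edge ws (Suc i mod ?k) \<in> Ea" if i: "i < ?k" "cycle_edge ws i \<in> Ea" for i
  proof (cases "Suc i mod ?k = p")
    case False
    let ?j = "Suc i mod ?k"
    have "?j < ?k" using \<open>0 < ?k\<close> by simp
    have "ws ! ?j \<noteq> v"
    proof
      assume "ws ! ?j = v"
      then have "ws ! p = ws ! ?j"
        using p(2) \<open>?j < ?k\<close> by (metis nth_mem)
      then show False
        using nth_eq_iff_index_eq[OF ws(1) p(1) \<open>?j < ?k\<close>] False by simp
    qed
    moreover have "ws ! ?j \<in> Va"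
      using simple_graph_edge_subset[OF simple(1) i(2)] by (simp add: cycle_edge_def)
    ultimately have "ws ! ?j \<notin> Vb"
      using common by blast
    then have "cycle_edge ws ?j \<notin> Eb"
      using simple_graph_edge_subset[OF simple(2)] by (auto simp: cycle_edge_def)
    moreover have "cycle_edge ws ?j \<in> Ea \<union> Eb"
      using ws(3) \<open>?j < ?k\<close> unfolding cycle_edges_eq_image by blast
    ultimately show ?thesis by blast
  qed (use p in simp)
  have "cycle_edge ws j \<in> Ea" if "j < ?k" for j
    by (rule cyclic_induct[where P = "\<lambda>i. cycle_edge ws i \<in> Ea", OF p(1) p(3) step that])
  then show ?thesis
    unfolding cycle_edges_eq_image by blast
qed

context
  fixes V1 V2 :: "'a set" and E1 E2 :: "'a set set" and v :: 'a
  assumes simple1: "simple_graph V1 E1" and simple2: "simple_graph V2 E2"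
    and common: "V1 \<inter> V2 = {v}"
begin

lemma glue_edges_disjoint: "E1 \<inter> E2 = {}"
proof -
  have "e \<notin> E2" if "e \<in> E1" for e
  proof
    assume "e \<in> E2"
    then have "e \<subseteq> {v}"
      using that simple_graph_edge_subset simple1 simple2 common by blast
    then show False
      using simple_graph_card_edge[OF simple1 that] card_mono[of "{v}" e] by simp
  qed
  then show ?thesis by blast
qed

lemma simple_graph_glue: "simple_graph (V1 \<union> V2) (E1 \<union> E2)"
  unfolding simple_graph_def
proof
  fix e assume "e \<in> E1 \<union> E2"
  then obtain a b where "a \<in> V1 \<and> b \<in> V1 \<or> a \<in> V2 \<and> b \<in> V2" "a \<noteq> b" "e = {a, b}"
    using simple1 simple2 unfolding simple_graph_def by (metis UnE)
  then show "\<exists>a b. a \<in> V1 \<union> V2 \<and> b \<in> V1 \<union> V2 \<and> a \<noteq> b \<and> e = {a, b}"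
    by blast
qed

lemma degree_glue:
  assumes "finite E1" "finite E2"
  shows "card {e \<in> E1 \<union> E2. x \<in> e} = card {e \<in> E1. x \<in> e} + card {e \<in> E2. x \<in> e}"
proof -
  have "{e \<in> E1 \<union> E2. x \<in> e} = {e \<in> E1. x \<in> e} \<union> {e \<in> E2. x \<in> e}"
    by blast
  then show ?thesis
    using assms glue_edges_disjoint by (simp add: card_Un_disjoint disjoint_iff)
qed

lemma bridgeless_glue:
  assumes "connected_graph V1 E1" "connected_graph V2 E2" "bridgeless V1 E1" "bridgeless V2 E2"
  shows "bridgeless (V1 \<union> V2) (E1 \<union> E2)"
  unfolding bridgeless_def
proof
  fix e assume e: "e \<in> E1 \<union> E2"
  show "connected_graph (V1 \<union> V2) (E1 \<union> E2 - {e})"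
  proof (cases "e \<in> E1")
    case True
    then have "E1 \<union> E2 - {e} = (E1 - {e}) \<union> E2"
      using glue_edges_disjoint by blast
    then show ?thesis
      using assms True common connected_graph_glue[of V1 "E1 - {e}" V2 E2]
      unfolding bridgeless_def by simp
  next
    case False
    then have "e \<in> E2" "E1 \<union> E2 - {e} = E1 \<union> (E2 - {e})"
      using e by auto
    then show ?thesis
      using assms common connected_graph_glue[of V1 E1 V2 "E2 - {e}"]
      unfolding bridgeless_def by simp
  qed
qed

lemma bipartite_glue:
  assumes "bipartite V1 E1" "bipartite V2 E2"
  shows "bipartite (V1 \<union> V2) (E1 \<union> E2)"
proof -
  obtain A1 where A1: "A1 \<subseteq> V1" "\<forall>e\<in>E1. card (e \<inter> A1) = 1"
    using assms(1) unfolding bipartite_def by blast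
  obtain A2 where A2: "A2 \<subseteq> V2" "\<forall>e\<in>E2. card (e \<inter> A2) = 1"
    using assms(2) unfolding bipartite_def by blast
  \<comment> \<open>swap the sides of the second graph if necessary so that both put v on the same side\<close>
  define B where "B = (if v \<in> A1 \<longleftrightarrow> v \<in> A2 then A2 else V2 - A2)"
  have B: "B \<subseteq> V2" "v \<in> B \<Longrightarrow> v \<in> A1" "v \<in> A1 \<Longrightarrow> v \<in> B"
    "\<forall>e\<in>E2. card (e \<inter> B) = 1"
    using A2 common bipartition_complement[OF simple2 A2(2)] by (auto simp: B_def split: if_splits)
  have only_v: "x = v" if "x \<in> V1" "x \<in> V2" for x
    using that common by blast
  have "e \<inter> (A1 \<union> B) = e \<inter> A1" if "e \<in> E1" for e
    using simple_graph_edge_subset[OF simple1 that] only_v B(1,2) by blast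
  moreover have "e \<inter> (A1 \<union> B) = e \<inter> B" if "e \<in> E2" for e
    using simple_graph_edge_subset[OF simple2 that] only_v A1(1) B(3) by blast
  ultimately have "\<forall>e\<in>E1 \<union> E2. card (e \<inter> (A1 \<union> B)) = 1"
    using A1(2) B(4) by (metis UnE)
  moreover have "A1 \<union> B \<subseteq> V1 \<union> V2"
    using A1(1) B(1) by blast
  ultimately show ?thesis
    unfolding bipartite_def by blast
qed

lemma is_cycle_glue:
  assumes "is_cycle (E1 \<union> E2) C"
  shows "is_cycle E1 C \<or> is_cycle E2 C"
proof -
  obtain ws where ws: "distinct ws" "3 \<le> length ws" "C = cycle_edges ws" "C \<subseteq> E1 \<union> E2"
    using assms unfolding is_cycle_def by blast
  obtain p where p: "p < length ws" "v \<in> set ws \<Longrightarrow> ws ! p = v"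
  proof (cases "v \<in> set ws")
    case True
    then show ?thesis using that by (auto simp: in_set_conv_nth)
  next
    case False
    then show ?thesis using that[of 0] ws(2) by (cases ws) auto
  qed
  have "cycle_edge ws p \<in> E1 \<union> E2"
    using ws(3,4) p(1) unfolding cycle_edges_eq_image by blast
  then consider "cycle_edge ws p \<in> E1" | "cycle_edge ws p \<in> E2"
    by blast
  then have "C \<subseteq> E1 \<or> C \<subseteq> E2"
  proof cases
    case 1
    then show ?thesis
      using cycle_stays_on_side[OF simple1 simple2 common ws(1,2) _ p] ws(3,4) by blast
  next
    case 2
    have "V2 \<inter> V1 = {v}" "cycle_edges ws \<subseteq> E2 \<union> E1"
      using common ws(3,4) by blast+
    then show ?thesis
      using cycle_stays_on_side[OF simple2 simple1 _ ws(1,2) _ p] 2 ws(3) by blast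
  qed
  then show ?thesis
    using ws(1-3) unfolding is_cycle_def by blast
qed

lemma cactus_glue:
  assumes "cactus V1 E1" "cactus V2 E2"
  shows "cactus (V1 \<union> V2) (E1 \<union> E2)"
  unfolding cactus_def
proof (intro conjI ballI allI impI)
  show "simple_graph (V1 \<union> V2) (E1 \<union> E2)"
    by (rule simple_graph_glue)
  show "connected_graph (V1 \<union> V2) (E1 \<union> E2)"
    using assms common connected_graph_glue[of V1 E1 V2 E2] unfolding cactus_def by simp
  fix e C1 C2
  assume C: "is_cycle (E1 \<union> E2) C1 \<and> is_cycle (E1 \<union> E2) C2 \<and> e \<in> C1 \<and> e \<in> C2"
  have "is_cycle E1 C1 \<or> is_cycle E2 C1" "is_cycle E1 C2 \<or> is_cycle E2 C2"
    using C is_cycle_glue by blast+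
  moreover have "\<not> (is_cycle E1 C1 \<and> is_cycle E2 C2)" "\<not> (is_cycle E2 C1 \<and> is_cycle E1 C2)"
    using C glue_edges_disjoint by (auto dest: is_cycle_subset)
  ultimately consider "is_cycle E1 C1" "is_cycle E1 C2" | "is_cycle E2 C1" "is_cycle E2 C2"
    by blast
  then show "C1 = C2"
  proof cases
    case 1
    then show ?thesis
      using assms(1) C is_cycle_subset[OF 1(1)] unfolding cactus_def by blast
  next
    case 2
    then show ?thesis
      using assms(2) C is_cycle_subset[OF 2(1)] unfolding cactus_def by blast
  qed
qed

end

lemma bipartite_bridgeless_cactus_glue:
  assumes "bipartite_bridgeless_cactus V1 E1" "bipartite_bridgeless_cactus V2 E2"
    and "V1 \<inter> V2 = {v}"
  shows "bipartite_bridgeless_cactus (V1 \<union> V2) (E1 \<union> E2)"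
proof -
  have "simple_graph V1 E1" "simple_graph V2 E2" "connected_graph V1 E1" "connected_graph V2 E2"
    using assms(1,2) by (simp_all add: bipartite_bridgeless_cactus_def cactus_def)
  note glue = cactus_glue[OF this(1,2) assms(3)] bridgeless_glue[OF this(1,2) assms(3) this(3,4)]
    bipartite_glue[OF this(1,2) assms(3)]
  show ?thesis
    using assms(1,2) glue unfolding bipartite_bridgeless_cactus_def by blast
qed

section \<open>Components and the cyclomatic inequality\<close>

lemma Image_equiv_class_refine:
  assumes "equiv V R1" "equiv V R2" "R1 \<subseteq> R2" "x \<in> V"
  shows "R2 `` (R1 `` {x}) = R2 `` {x}"
proof
  show "R2 `` (R1 `` {x}) \<subseteq> R2 `` {x}"
    using assms(2,3) unfolding equiv_def trans_def by blast
  show "R2 `` {x} \<subseteq> R2 `` (R1 `` {x})"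
    using equiv_class_self[OF assms(1,4)] by blast
qed

lemma image_Image_quotient:
  assumes "equiv V R1" "equiv V R2" "R1 \<subseteq> R2"
  shows "(\<lambda>X. R2 `` X) ` (V // R1) = V // R2"
  using Image_equiv_class_refine[OF assms]
  unfolding quotient_def by (simp add: image_UN)

lemma card_quotient_antimono:
  assumes "finite V" "equiv V R1" "equiv V R2" "R1 \<subseteq> R2"
  shows "card (V // R2) \<le> card (V // R1)"
proof -
  have "finite (V // R1)"
    using assms(1,2) by (intro finite_quotient) (auto simp: equiv_def refl_on_def)
  then show ?thesis
    using card_image_le image_Image_quotient[OF assms(2-4)] by metis
qed

lemma card_quotient_strict_antimono:
  assumes "finite V" "equiv V R1" "equiv V R2" "R1 \<subseteq> R2" "(x, y) \<in> R2" "(x, y) \<notin> R1"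
  shows "card (V // R2) < card (V // R1)"
proof -
  have "x \<in> V" "y \<in> V"
    using assms(3,5) unfolding equiv_def refl_on_def by auto
  have "R1 `` {x} \<noteq> R1 `` {y}" "R2 `` (R1 `` {x}) = R2 `` (R1 `` {y})"
    using eq_equiv_class_iff[OF assms(2)] eq_equiv_class_iff[OF assms(3)] assms(5,6)
      Image_equiv_class_refine[OF assms(2-4)] \<open>x \<in> V\<close> \<open>y \<in> V\<close>
    by auto
  moreover have "R1 `` {x} \<in> V // R1" "R1 `` {y} \<in> V // R1"
    using \<open>x \<in> V\<close> \<open>y \<in> V\<close> by (auto intro: quotientI)
  ultimately have "\<not> inj_on (\<lambda>X. R2 `` X) (V // R1)"
    by (meson inj_onD)
  moreover have "finite (V // R1)"
    using assms(1,2) by (intro finite_quotient) (auto simp: equiv_def refl_on_def)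
  ultimately show ?thesis
    using card_image_le[of "V // R1" "\<lambda>X. R2 `` X"] inj_on_iff_eq_card
      image_Image_quotient[OF assms(2-4)] by fastforce
qed

definition reachable_rel :: "'a set \<Rightarrow> 'a set set \<Rightarrow> ('a \<times> 'a) set" where
  "reachable_rel V F = {(x, y). x \<in> V \<and> y \<in> V \<and> reachable F x y}"

definition num_components :: "'a set \<Rightarrow> 'a set set \<Rightarrow> nat" where
  "num_components V F = card (V // reachable_rel V F)"

lemma equiv_reachable_rel: "equiv V (reachable_rel V F)"
proof (rule equivI)
  show "reachable_rel V F \<subseteq> V \<times> V" "refl_on V (reachable_rel V F)"
    unfolding reachable_rel_def refl_on_def by auto
  show "sym (reachable_rel V F)"
    unfolding reachable_rel_def by (rule symI) (auto intro: reachable_sym)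
  show "trans (reachable_rel V F)"
    unfolding reachable_rel_def by (rule transI) (auto intro: reachable_trans)
qed

lemma reachable_rel_mono: "F \<subseteq> E \<Longrightarrow> reachable_rel V F \<subseteq> reachable_rel V E"
  unfolding reachable_rel_def by (auto intro: reachable_mono)

lemma num_components_le_card: "finite V \<Longrightarrow> num_components V F \<le> card V"
  unfolding num_components_def quotient_def UNION_singleton_eq_range
  by (rule card_image_le)

lemma num_components_connected:
  assumes "connected_graph V E" "V \<noteq> {}"
  shows "num_components V E = 1"
proof -
  have "reachable_rel V E `` {x} = V" if "x \<in> V" for x
    using assms(1) that unfolding reachable_rel_def connected_graph_def by auto
  then have "V // reachable_rel V E = {V}"
    using assms(2) unfolding quotient_def by auto
  then show ?thesis
    by (simp add: num_components_def)
qed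

lemma num_components_antimono:
  "finite V \<Longrightarrow> F \<subseteq> E \<Longrightarrow> num_components V E \<le> num_components V F"
  unfolding num_components_def
  by (intro card_quotient_antimono equiv_reachable_rel reachable_rel_mono)

lemma num_components_strict_antimono:
  assumes "finite V" "F \<subseteq> E" "x \<in> V" "y \<in> V" "reachable E x y" "\<not> reachable F x y"
  shows "num_components V E < num_components V F"
  unfolding num_components_def
proof (rule card_quotient_strict_antimono[OF assms(1) equiv_reachable_rel equiv_reachable_rel
      reachable_rel_mono[OF assms(2)]])
  show "(x, y) \<in> reachable_rel V E" "(x, y) \<notin> reachable_rel V F"
    using assms(3-6) by (simp_all add: reachable_rel_def)
qed

lemma finite_cycles: "finite E \<Longrightarrow> finite {C. is_cycle E C}"
  by (rule finite_subset[of _ "Pow E"]) (auto dest: is_cycle_subset)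

lemma card_cycles_mono:
  "finite E \<Longrightarrow> F \<subseteq> E \<Longrightarrow> card {C. is_cycle F C} \<le> card {C. is_cycle E C}"
  by (intro card_mono finite_cycles) (auto intro: is_cycle_mono)

lemma card_cycles_strict_mono:
  assumes "finite E" "F \<subseteq> E" "is_cycle E C" "\<not> C \<subseteq> F"
  shows "card {C. is_cycle F C} < card {C. is_cycle E C}"
  using assms by (intro psubset_card_mono finite_cycles) (auto intro: is_cycle_mono dest: is_cycle_subset)

lemma no_cycle_empty: "\<not> is_cycle {} C"
  unfolding is_cycle_def cycle_edges_eq_image by fastforce

text \<open>Adding an edge either joins two components or closes a new cycle through it.\<close>
lemma cyclomatic_inequality:
  assumes "finite V" "simple_graph V E"
  shows "card E + num_components V E \<le> card V + card {C. is_cycle E C}"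
  using simple_graph_finite_edges[OF assms(2,1)] assms(2)
proof (induction E rule: finite_induct)
  case empty
  then show ?case
    using num_components_le_card[OF assms(1), of "{}"] no_cycle_empty by simp
next
  case (insert e F)
  obtain u w where uw: "u \<in> V" "w \<in> V" "u \<noteq> w" "e = {u, w}"
    using insert.prems unfolding simple_graph_def by blast
  have IH: "card F + num_components V F \<le> card V + card {C. is_cycle F C}"
    using insert.IH insert.prems unfolding simple_graph_def by blast
  have card_insert: "card (insert e F) = card F + 1"
    using insert.hyps by simp
  show ?case
  proof (cases "reachable F u w")
    case True
    then obtain C where "is_cycle (insert e F) C" "e \<in> C"
      using reachable_closes_cycle[of F u w] uw insert.hyps(2) by blast
    then have "card {C. is_cycle F C} < card {C. is_cycle (insert e F) C}"
      using insert.hyps by (intro card_cycles_strict_mono) auto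
    moreover have "num_components V (insert e F) \<le> num_components V F"
      using assms(1) by (intro num_components_antimono) auto
    ultimately show ?thesis
      using IH card_insert by linarith
  next
    case False
    then have "num_components V (insert e F) < num_components V F"
      using assms(1) uw reachable_edge[of u w "insert e F"]
      by (intro num_components_strict_antimono[of V F _ u w]) auto
    moreover have "card {C. is_cycle F C} \<le> card {C. is_cycle (insert e F) C}"
      using insert.hyps by (intro card_cycles_mono) auto
    ultimately show ?thesis
      using IH card_insert by linarith
  qed
qed

section \<open>Necessity\<close>

lemma bridgeless_edge_on_cycle:
  assumes "simple_graph V E" "bridgeless V E" "e \<in> E"
  shows "\<exists>C. is_cycle E C \<and> e \<in> C"
proof -
  obtain u w where uw: "u \<in> V" "w \<in> V" "u \<noteq> w" "e = {u, w}"
    using assms(1,3) unfolding simple_graph_def by blast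
  have "reachable (E - {e}) u w"
    using assms(2,3) uw unfolding bridgeless_def connected_graph_def by blast
  moreover have "insert {u, w} (E - {e}) = E"
    using assms(3) uw(4) by blast
  ultimately show ?thesis
    using reachable_closes_cycle[of "E - {e}" u w] uw by auto
qed

lemma card_UN_cactus_cycles:
  assumes "finite V" "cactus V E" "\<And>C. is_cycle E C \<Longrightarrow> A C \<subseteq> C"
  shows "card (\<Union>C\<in>{C. is_cycle E C}. A C) = (\<Sum>C\<in>{C. is_cycle E C}. card (A C))"
proof (rule card_UN_disjoint)
  have "finite E"
    using assms(1,2) simple_graph_finite_edges unfolding cactus_def by blast
  then show "finite {C. is_cycle E C}"
    by (rule finite_cycles)
  show "\<forall>C\<in>{C. is_cycle E C}. finite (A C)"
  proof
    fix C assume "C \<in> {C. is_cycle E C}"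
    then have "A C \<subseteq> E"
      using assms(3) is_cycle_subset by blast
    then show "finite (A C)"
      using \<open>finite E\<close> by (rule finite_subset)
  qed
  show "\<forall>C1\<in>{C. is_cycle E C}. \<forall>C2\<in>{C. is_cycle E C}. C1 \<noteq> C2 \<longrightarrow> A C1 \<inter> A C2 = {}"
  proof (intro ballI impI)
    fix C1 C2 assume C: "C1 \<in> {C. is_cycle E C}" "C2 \<in> {C. is_cycle E C}" "C1 \<noteq> C2"
    have "C1 \<inter> C2 = {}"
    proof (rule equals0I)
      fix e assume "e \<in> C1 \<inter> C2"
      moreover have "e \<in> E"
        using calculation C(1) is_cycle_subset by blast
      ultimately show False
        using assms(2) C unfolding cactus_def by blast
    qed
    then show "A C1 \<inter> A C2 = {}"
      using assms(3) C by blast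
  qed
qed

lemma card_cycle_bipartite:
  assumes "bipartite V E" "is_cycle E C"
  shows "even (card C)" "4 \<le> card C"
proof -
  obtain vs where vs: "distinct vs" "3 \<le> length vs" "C = cycle_edges vs" "C \<subseteq> E"
    using assms(2) unfolding is_cycle_def by blast
  obtain A where "\<forall>e\<in>E. card (e \<inter> A) = 1"
    using assms(1) unfolding bipartite_def by blast
  then have "even (length vs)"
    using vs by (intro even_length_if_bipartite) auto
  then show "even (card C)" "4 \<le> card C"
    using vs(2,3) card_cycle_edges[OF vs(1,2)] by presburger+
qed

context
  fixes V :: "'a set" and E :: "'a set set"
  assumes finite_V: "finite V" and bbc: "bipartite_bridgeless_cactus V E"
begin

private lemma cactus: "cactus V E" and bridgeless: "bridgeless V E" and bipartite: "bipartite V E"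
  using bbc by (simp_all add: bipartite_bridgeless_cactus_def)

lemma bipartite_bridgeless_cactus_edges_UN_cycles: "E = (\<Union>C\<in>{C. is_cycle E C}. C)"
proof
  have "simple_graph V E"
    using cactus by (simp add: cactus_def)
  then show "E \<subseteq> (\<Union>C\<in>{C. is_cycle E C}. C)"
    using bridgeless_edge_on_cycle[OF _ bridgeless] by blast
  show "(\<Union>C\<in>{C. is_cycle E C}. C) \<subseteq> E"
    using is_cycle_subset by blast
qed

lemma even_degree_bipartite_bridgeless_cactus: "even (card {e \<in> E. x \<in> e})"
proof -
  have "{e \<in> E. x \<in> e} = (\<Union>C\<in>{C. is_cycle E C}. {e \<in> C. x \<in> e})"
    using bipartite_bridgeless_cactus_edges_UN_cycles by blast
  also have "card \<dots> = (\<Sum>C\<in>{C. is_cycle E C}. card {e \<in> C. x \<in> e})"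
    by (rule card_UN_cactus_cycles[OF finite_V cactus]) blast
  finally show ?thesis
    by (auto intro!: dvd_sum simp: is_cycle_def degree_cycle_edges)
qed

lemma card_edges_bipartite_bridgeless_cactus:
  assumes "V \<noteq> {}"
  shows "even (card E)" "3 * card E \<le> 4 * (card V - 1)"
proof -
  let ?Cs = "{C. is_cycle E C}"
  have card_E: "card E = (\<Sum>C\<in>?Cs. card C)"
    using card_UN_cactus_cycles[OF finite_V cactus, of "\<lambda>C. C"]
      bipartite_bridgeless_cactus_edges_UN_cycles by simp
  show "even (card E)"
    unfolding card_E by (intro dvd_sum card_cycle_bipartite[OF bipartite]) simp
  have "4 * card ?Cs \<le> card E"
    using sum_mono[of ?Cs "\<lambda>_. 4" card] card_cycle_bipartite(2)[OF bipartite] card_E by simp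
  moreover have "card E + 1 \<le> card V + card ?Cs"
    using cyclomatic_inequality[OF finite_V] num_components_connected[OF _ assms] cactus
    unfolding cactus_def by fastforce
  ultimately show "3 * card E \<le> 4 * (card V - 1)"
    by linarith
qed

end

section \<open>Sufficiency\<close>

lemma degree_outside:
  assumes "simple_graph V E" "x \<notin> V"
  shows "card {e \<in> E. x \<in> e} = 0"
proof -
  have "{e \<in> E. x \<in> e} = {}"
    using simple_graph_edge_subset[OF assms(1)] assms(2) by blast
  then show ?thesis
    by (simp only: card.empty)
qed

lemma even_cycle_realization:
  assumes "finite V" "even (card V)" "4 \<le> card V"
  shows "\<exists>E. bipartite_bridgeless_cactus V E \<and> (\<forall>x\<in>V. card {e \<in> E. x \<in> e} = 2)"
proof -
  obtain vs where vs: "set vs = V" "distinct vs"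
    using finite_distinct_list[OF assms(1)] by blast
  then have "length vs = card V"
    using distinct_card by fastforce
  then have "3 \<le> length vs" "even (length vs)"
    using assms(2,3) by simp_all
  then show ?thesis
    using bipartite_bridgeless_cactus_cycle_edges[OF vs(2)] degree_cycle_edges[OF vs(2)] vs(1)
    by auto
qed

lemma realization_glue_square:
  assumes bbc: "bipartite_bridgeless_cactus V E" and "finite V"
    and degree: "\<forall>x\<in>V. card {e \<in> E. x \<in> e} = d x"
    and "v \<in> V" and new: "distinct [v, a, b, c]" "a \<notin> V" "b \<notin> V" "c \<notin> V"
  shows "\<exists>F. bipartite_bridgeless_cactus (V \<union> {a, b, c}) F \<and>
    (\<forall>x\<in>V \<union> {a, b, c}. card {e \<in> F. x \<in> e} = (d(v := d v + 2, a := 2, b := 2, c := 2)) x)"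
proof (intro exI conjI ballI)
  let ?sq = "[v, a, b, c]"
  have common: "V \<inter> set ?sq = {v}" and union: "V \<union> set ?sq = V \<union> {a, b, c}"
    using assms(4-8) by auto
  have square: "bipartite_bridgeless_cactus (set ?sq) (cycle_edges ?sq)"
    using bipartite_bridgeless_cactus_cycle_edges[OF new(1)] by simp
  show "bipartite_bridgeless_cactus (V \<union> {a, b, c}) (E \<union> cycle_edges ?sq)"
    using bipartite_bridgeless_cactus_glue[OF bbc square common] union by simp
  have simple: "simple_graph V E" "simple_graph (set ?sq) (cycle_edges ?sq)"
    using bbc square by (simp_all add: bipartite_bridgeless_cactus_def cactus_def)
  have "finite E" "finite (cycle_edges ?sq)"
    using simple_graph_finite_edges[OF simple(1) assms(2)] by (simp_all add: cycle_edges_eq_image)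
  fix x assume "x \<in> V \<union> {a, b, c}"
  moreover have "card {e \<in> E \<union> cycle_edges ?sq. x \<in> e}
      = card {e \<in> E. x \<in> e} + (if x \<in> {v, a, b, c} then 2 else 0)"
    using degree_glue[OF simple common \<open>finite E\<close> \<open>finite (cycle_edges ?sq)\<close>]
      degree_cycle_edges[OF new(1)] by simp
  moreover have "card {e \<in> E. x \<in> e} = 0" if "x \<notin> V"
    using degree_outside[OF simple(1) that] .
  ultimately show "card {e \<in> E \<union> cycle_edges ?sq. x \<in> e} = (d(v := d v + 2, a := 2, b := 2, c := 2)) x"
    using degree new \<open>v \<in> V\<close> by auto
qed

lemma three_vertices_of_degree_two:
  fixes d :: "'a \<Rightarrow> nat"
  assumes "finite V" "\<forall>x\<in>V. even (d x) \<and> 2 \<le> d x" "3 * (\<Sum>x\<in>V. d x) \<le> 8 * (card V - 1)"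
    and "v \<in> V" "d v \<noteq> 2"
  shows "\<exists>a b c. distinct [a, b, c] \<and> {a, b, c} \<subseteq> V \<and> d a = 2 \<and> d b = 2 \<and> d c = 2"
proof -
  let ?T = "{x \<in> V. d x = 2}"
  have "finite ?T" "?T \<subseteq> V"
    using assms(1) by auto
  have "4 * card (V - ?T) \<le> (\<Sum>x\<in>V - ?T. d x)"
    using sum_mono[of "V - ?T" "\<lambda>_. 4" d] assms(2) by fastforce
  moreover have "(\<Sum>x\<in>?T. d x) = (\<Sum>x\<in>?T. 2)"
    by (rule sum.cong) simp_all
  then have "(\<Sum>x\<in>V. d x) = (\<Sum>x\<in>V - ?T. d x) + 2 * card ?T"
    using sum.subset_diff[OF \<open>?T \<subseteq> V\<close> assms(1), of d] by simp
  moreover have "card V = card (V - ?T) + card ?T"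
    using card_Diff_subset[OF \<open>finite ?T\<close> \<open>?T \<subseteq> V\<close>] card_mono[OF assms(1) \<open>?T \<subseteq> V\<close>] by simp
  moreover have "card (V - ?T) \<noteq> 0"
    using assms(1,4,5) by auto
  ultimately have "3 \<le> card ?T"
    using assms(3) by linarith
  then obtain T3 where "T3 \<subseteq> ?T" "card T3 = 3"
    by (meson obtain_subset_with_card_n)
  then show ?thesis
    unfolding card_3_iff by auto
qed

lemma sum_remove_square:
  fixes d :: "'a \<Rightarrow> nat"
  assumes "finite V" "distinct [a, b, c]" "{a, b, c} \<subseteq> V" "d a = 2" "d b = 2" "d c = 2"
    and "v \<in> V - {a, b, c}" "2 \<le> d v"
  shows "(\<Sum>x\<in>V - {a, b, c}. (d(v := d v - 2)) x) + 8 = (\<Sum>x\<in>V. d x)"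
proof -
  let ?V' = "V - {a, b, c}"
  have "finite ?V'"
    using assms(1) by simp
  have "(\<Sum>x\<in>V. d x) = (\<Sum>x\<in>?V'. d x) + 6"
    using sum.subset_diff[OF assms(3,1), of d] assms(2,4-6) by simp
  moreover have "(\<Sum>x\<in>?V'. (d(v := d v - 2)) x) + 2 = (\<Sum>x\<in>?V'. d x)"
    using sum.remove[OF \<open>finite ?V'\<close> assms(7), of d]
      sum.remove[OF \<open>finite ?V'\<close> assms(7), of "d(v := d v - 2)"] assms(8) by simp
  ultimately show ?thesis
    by simp
qed

lemma bipartite_bridgeless_cactus_realization_exists:
  fixes d :: "'a \<Rightarrow> nat"
  assumes "finite V" "V \<noteq> {}" "\<forall>x\<in>V. even (d x) \<and> 2 \<le> d x" "4 dvd (\<Sum>x\<in>V. d x)"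
    and "3 * (\<Sum>x\<in>V. d x) \<le> 8 * (card V - 1)"
  shows "\<exists>E. bipartite_bridgeless_cactus V E \<and> (\<forall>x\<in>V. card {e \<in> E. x \<in> e} = d x)"
  using assms
proof (induction "card V" arbitrary: V d rule: less_induct)
  case less
  show ?case
  proof (cases "\<forall>x\<in>V. d x = 2")
    case True
    then have "(\<Sum>x\<in>V. d x) = 2 * card V"
      by simp
    moreover have "card V \<noteq> 0"
      using less.prems(1,2) by simp
    ultimately have "even (card V)" "4 \<le> card V"
      using less.prems(4,5) by presburger+
    then show ?thesis
      using even_cycle_realization[OF less.prems(1)] True by auto
  next
    case False
    then obtain v where v: "v \<in> V" "d v \<noteq> 2"
      by blast
    then have "4 \<le> d v"
      using less.prems(3) by fastforce
    obtain a b c where abc: "distinct [a, b, c]" "{a, b, c} \<subseteq> V" "d a = 2" "d b = 2" "d c = 2"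
      using three_vertices_of_degree_two[OF less.prems(1,3,5) v] by blast
    define V' where "V' = V - {a, b, c}"
    define d' where "d' = d(v := d v - 2)"
    have "v \<in> V'" "distinct [v, a, b, c]"
      using v abc by (auto simp: V'_def)
    have card_V: "card V = card V' + 3"
      using abc less.prems(1) card_Diff_subset[of "{a, b, c}" V] card_mono[of V "{a, b, c}"]
      by (simp add: V'_def)
    have sum_V: "(\<Sum>x\<in>V. d x) = (\<Sum>x\<in>V'. d' x) + 8"
      using sum_remove_square[OF less.prems(1) abc] \<open>v \<in> V'\<close> \<open>4 \<le> d v\<close>
      by (simp add: V'_def d'_def)
    obtain E' where E': "bipartite_bridgeless_cactus V' E'" "\<forall>x\<in>V'. card {e \<in> E'. x \<in> e} = d' x"
    proof -
      have "\<forall>x\<in>V'. even (d' x) \<and> 2 \<le> d' x"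
        using less.prems(3) \<open>4 \<le> d v\<close> by (auto simp: V'_def d'_def)
      moreover have "4 dvd (\<Sum>x\<in>V'. d' x)" "3 * (\<Sum>x\<in>V'. d' x) \<le> 8 * (card V' - 1)"
        using less.prems(4,5) sum_V card_V by presburger+
      ultimately show ?thesis
        using less.hyps[of V' d'] that \<open>v \<in> V'\<close> card_V less.prems(1) by (auto simp: V'_def)
    qed
    have new: "finite V'" "a \<notin> V'" "b \<notin> V'" "c \<notin> V'"
      using less.prems(1) by (auto simp: V'_def)
    have "V' \<union> {a, b, c} = V"
      using abc by (auto simp: V'_def)
    then obtain F where F: "bipartite_bridgeless_cactus V F"
      "\<forall>x\<in>V. card {e \<in> F. x \<in> e} = (d'(v := d' v + 2, a := 2, b := 2, c := 2)) x"
      using realization_glue_square[OF E'(1) new(1) E'(2) \<open>v \<in> V'\<close> \<open>distinct [v, a, b, c]\<close> new(2-4)]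
      by metis
    moreover have "(d'(v := d' v + 2, a := 2, b := 2, c := 2)) x = d x" for x
      using abc \<open>4 \<le> d v\<close> by (auto simp: d'_def)
    ultimately show ?thesis
      by metis
  qed
qed

lemma handshake:
  assumes "simple_graph V E" "finite V"
  shows "(\<Sum>x\<in>V. card {e \<in> E. x \<in> e}) = 2 * card E"
proof -
  have "finite E"
    using simple_graph_finite_edges[OF assms] .
  have "(\<Sum>x\<in>V. card {e \<in> E. x \<in> e}) = (\<Sum>x\<in>V. \<Sum>e\<in>E. if x \<in> e then 1 else 0)"
    using sum.inter_filter[OF \<open>finite E\<close>, of "\<lambda>_. 1::nat"] by simp
  also have "\<dots> = (\<Sum>e\<in>E. \<Sum>x\<in>V. if x \<in> e then 1 else 0)"
    by (rule sum.swap)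
  also have "\<dots> = (\<Sum>e\<in>E. card {x \<in> V. x \<in> e})"
    using sum.inter_filter[OF assms(2), of "\<lambda>_. 1::nat"] by simp
  also have "\<dots> = (\<Sum>e\<in>E. 2)"
  proof (rule sum.cong[OF refl])
    fix e assume "e \<in> E"
    then have "{x \<in> V. x \<in> e} = e"
      using simple_graph_edge_subset[OF assms(1)] by blast
    then show "card {x \<in> V. x \<in> e} = 2"
      using simple_graph_card_edge[OF assms(1) \<open>e \<in> E\<close>] by simp
  qed
  finally show ?thesis
    by simp
qed

lemma bipartite_bridgeless_cactus_realization_iff:
  fixes d :: "'a \<Rightarrow> nat"
  assumes "finite V" "V \<noteq> {}" "\<forall>x\<in>V. 1 \<le> d x"
  shows "(\<exists>E. bipartite_bridgeless_cactus V E \<and> (\<forall>x\<in>V. card {e \<in> E. x \<in> e} = d x))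
    \<longleftrightarrow> (\<forall>x\<in>V. even (d x)) \<and> 4 dvd (\<Sum>x\<in>V. d x) \<and> 3 * (\<Sum>x\<in>V. d x) \<le> 8 * (card V - 1)"
proof
  assume "\<exists>E. bipartite_bridgeless_cactus V E \<and> (\<forall>x\<in>V. card {e \<in> E. x \<in> e} = d x)"
  then obtain E where E: "bipartite_bridgeless_cactus V E" "\<forall>x\<in>V. card {e \<in> E. x \<in> e} = d x"
    by blast
  have "simple_graph V E"
    using E(1) by (simp add: bipartite_bridgeless_cactus_def cactus_def)
  then have "(\<Sum>x\<in>V. d x) = 2 * card E"
    using handshake[OF _ assms(1)] E(2) by (metis (mono_tags, lifting) sum.cong)
  moreover have "even (d x)" if "x \<in> V" for x
    using even_degree_bipartite_bridgeless_cactus[OF assms(1) E(1), of x] E(2) that by simp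
  ultimately show "(\<forall>x\<in>V. even (d x)) \<and> 4 dvd (\<Sum>x\<in>V. d x) \<and> 3 * (\<Sum>x\<in>V. d x) \<le> 8 * (card V - 1)"
    using card_edges_bipartite_bridgeless_cactus[OF assms(1) E(1) assms(2)]
    by (auto elim!: evenE)
next
  assume "(\<forall>x\<in>V. even (d x)) \<and> 4 dvd (\<Sum>x\<in>V. d x) \<and> 3 * (\<Sum>x\<in>V. d x) \<le> 8 * (card V - 1)"
  moreover have "\<forall>x\<in>V. even (d x) \<longrightarrow> 2 \<le> d x"
    using assms(3) by (auto elim!: evenE)
  ultimately show "\<exists>E. bipartite_bridgeless_cactus V E \<and> (\<forall>x\<in>V. card {e \<in> E. x \<in> e} = d x)"
    using bipartite_bridgeless_cactus_realization_exists[OF assms(1,2)] by blast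
qed

lemma even_half_bound_iff:
  fixes s k :: nat
  assumes "even s"
  shows "(s div 2 \<le> 2 * (2 * k div 3) \<and> even (s div 2)) \<longleftrightarrow> 4 dvd s \<and> 3 * s \<le> 8 * k"
proof -
  have bound: "2 * u \<le> 2 * (2 * k div 3) \<longleftrightarrow> 3 * (2 * u) \<le> 4 * k" for u
    using less_eq_div_iff_mult_less_eq[of 3 u "2 * k"] by linarith
  obtain t where "s = 2 * t"
    using assms by blast
  then show ?thesis
    using bound by (cases "even t") (auto elim!: evenE)
qed

theorem theorem5p5:
  fixes n :: nat and d :: "nat \<Rightarrow> nat"
  assumes "degree_sequence n d" and "4 \<le> n"
  shows "(\<exists>E. realization n d E \<and> cactus {1..n} E \<and> bridgeless {1..n} E \<and> bipartite {1..n} E)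
     \<longleftrightarrow> ((\<Sum>i=1..n. d i) div 2 \<le> 2 * ((2 * (n - 1)) div 3)
          \<and> even ((\<Sum>i=1..n. d i) div 2) \<and> (\<forall>i\<in>{1..n}. even (d i)))"
proof -
  have positive: "\<forall>i\<in>{1..n}. 1 \<le> d i" and even_sum: "even (\<Sum>i=1..n. d i)"
    using assms(1) unfolding degree_sequence_def by auto
  have "(\<exists>E. realization n d E \<and> cactus {1..n} E \<and> bridgeless {1..n} E \<and> bipartite {1..n} E)
      \<longleftrightarrow> (\<exists>E. bipartite_bridgeless_cactus {1..n} E \<and> (\<forall>i\<in>{1..n}. card {e \<in> E. i \<in> e} = d i))"
    unfolding realization_def bipartite_bridgeless_cactus_def cactus_def by blast
  also have "\<dots> \<longleftrightarrow> (\<forall>i\<in>{1..n}. even (d i)) \<and> 4 dvd (\<Sum>i=1..n. d i)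
      \<and> 3 * (\<Sum>i=1..n. d i) \<le> 8 * (n - 1)"
    using bipartite_bridgeless_cactus_realization_iff[OF _ _ positive] assms(2) by simp
  also have "\<dots> \<longleftrightarrow> ((\<Sum>i=1..n. d i) div 2 \<le> 2 * ((2 * (n - 1)) div 3)
      \<and> even ((\<Sum>i=1..n. d i) div 2) \<and> (\<forall>i\<in>{1..n}. even (d i)))"
    using even_half_bound_iff[OF even_sum, of "n - 1"] by blast
  finally show ?thesis .
qed

end
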